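(* Let $n,r\ge 1$ and let $D=\{(\mathbf s_1,\mathbf t_1),\dots,(\mathbf s_r,\mathbf t_r)\}\subset \mathbb F_2^n\times\mathbb F_2^n$ be a data set, with $\mathbf s_j=(s_{j,1},\dots,s_{j,n})$ and $\mathbf t_j=(t_{j,1},\dots,t_{j,n})$. Fix a gene index $i\in\{1,\dots,n\}$. Put $$f_i=\sum_{j=1}^r t_{j,i}\prod_{e=1}^n\bigl(1-(x_e-s_{j,e})\bigr),\qquad p=\prod_{j=1}^r\Bigl(1-\prod_{e=1}^n\bigl(1-(x_e-s_{j,e})\bigr)\Bigr),$$ and let $I=\langle p\rangle$ in $R=\mathbb F_2[x_1,\dots,x_n]/\langle x_e^2-x_e: 1\le e\le n\rangle$; this $I$ is the ideal of Boolean polynomials vanishing on $\{\mathbf s_1,\dots,\mathbf s_r\}$, so $f_i+I$ is the set of Boolean functions $h$ with $h(\mathbf s_j)=t_{j,i}$ for all $j$. Introduce indeterminates $b_H$, $H\subseteq[n]$, let $g=\sum_{H\subseteq[n]}b_H\prod_{l\in H}x_l$, and write the reduction of $f_i+g\,p$ modulo $\langle x_e^2-x_e\rangle$ as $\sum_{S\subseteq[n]}W_S\prod_{l\in S}x_l$, where each $W_S=W_S(b_H,\mathbf s_j,\mathbf t_j)$ is a polynomial (affine-linear over $\mathbb F_2$) in the $b_H$. Consider the ring homomorphism $$\Phi:\overline{\mathbb F}_2[\{c_S:S\subseteq[n]\}]\to\overline{\mathbb F}_2[\{b_H:H\subseteq[n]\}],\qquad c_S\mapsto W_S .$$ Then $\ker(\Phi)$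 is the ideal of all polynomials that fit the data set $D$ (i.e. the vanishing ideal of the set of coefficient vectors $(W_S)_S$ obtained as the $b_H$ vary); in particular, the $\mathbb F_2$-rational points of the variety $\mathbb V(\ker\Phi)\subseteq\overline{\mathbb F}_2^{\,2^n}$, identified with Boolean polynomials via $(c_S)_{S\subseteq[n]}\leftrightarrow\sum_S c_S\prod_{l\in S}x_l$, are exactly the models fitting $D$, namely the elements of $f_i+I$.
   Context: Boolean functions $\mathbb F_2^n\to\mathbb F_2$ are identified with elements of $R=\mathbb F_2[x_1,\dots,x_n]/\langle x_e^2-x_e\rangle$, each written uniquely as $\sum_{S\subseteq[n]}c_S\prod_{l\in S}x_l$ with $c_S\in\mathbb F_2$, and hence with vectors $(c_S)_{S\subseteq[n]}\in\mathbb F_2^{2^n}$. $[n]=\{1,\dots,n\}$. $\overline{\mathbb F}_2$ is the algebraic closure of $\mathbb F_2$. A model for gene $i$ "fits" $D$ if it maps $\mathbf s_j$ to $t_{j,i}$ for every $j$. *)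

theory Defs
  imports "HOL-Library.Poly_Mapping" "HOL-Library.Z2" "HOL-Algebra.Algebraic_Closure_Type"
begin

type_synonym ('v, 'k) mpoly = "('v \<Rightarrow>\<^sub>0 nat) \<Rightarrow>\<^sub>0 'k"

definition mvar :: "'v \<Rightarrow> ('v, 'k::comm_semiring_1) mpoly" where
  "mvar v = Poly_Mapping.single (Poly_Mapping.single v 1) 1"

definition mconst :: "'k \<Rightarrow> ('v, 'k::zero) mpoly" where
  "mconst c = Poly_Mapping.single 0 c"

definition mvars :: "('v, 'k::zero) mpoly \<Rightarrow> 'v set" where
  "mvars P = (\<Union>m\<in>Poly_Mapping.keys P. Poly_Mapping.keys m)"

text \<open>With phi = mconst this is the substitution
homomorphism of polynomial rings; with phi = id it is evaluation at a point.\<close>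
definition mhom :: "('k \<Rightarrow> 'b::comm_semiring_1) \<Rightarrow> ('v \<Rightarrow> 'b) \<Rightarrow> ('v, 'k::zero) mpoly \<Rightarrow> 'b" where
  "mhom phi sigma P = (\<Sum>m\<in>Poly_Mapping.keys P. phi (Poly_Mapping.lookup P m) * (\<Prod>v\<in>Poly_Mapping.keys m. sigma v ^ Poly_Mapping.lookup m v))"

text \<open>An element of R with coefficients in a commutative ring 'a is represented by its
coefficient vector (c_S), S a subset of {1..n}, standing for sum_S c_S prod_{l in S} x_l.
Entries at sets S not contained in {1..n} are irrelevant.\<close>

definition bconst :: "'a::comm_ring_1 \<Rightarrow> nat set \<Rightarrow> 'a" where
  "bconst c = (\<lambda>S. if S = {} then c else 0)"

definition bvar :: "nat \<Rightarrow> nat set \<Rightarrow> 'a::comm_ring_1" where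
  "bvar e = (\<lambda>S. if S = {e} then 1 else 0)"

definition badd :: "(nat set \<Rightarrow> 'a::comm_ring_1) \<Rightarrow> (nat set \<Rightarrow> 'a) \<Rightarrow> nat set \<Rightarrow> 'a" where
  "badd u v = (\<lambda>S. u S + v S)"

definition bsub :: "(nat set \<Rightarrow> 'a::comm_ring_1) \<Rightarrow> (nat set \<Rightarrow> 'a) \<Rightarrow> nat set \<Rightarrow> 'a" where
  "bsub u v = (\<lambda>S. u S - v S)"

text \<open>Multiplication in R: x_A * x_B = x_(A union B) (since x_e^2 = x_e).\<close>
definition bmul :: "nat \<Rightarrow> (nat set \<Rightarrow> 'a::comm_ring_1) \<Rightarrow> (nat set \<Rightarrow> 'a) \<Rightarrow> nat set \<Rightarrow> 'a" where
  "bmul n u v = (\<lambda>S. \<Sum>A\<in>Pow {1..n}. \<Sum>B\<in>Pow {1..n}. if A \<union> B = S then u A * v B else 0)"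

definition bprod :: "nat \<Rightarrow> (nat \<Rightarrow> nat set \<Rightarrow> 'a::comm_ring_1) \<Rightarrow> nat list \<Rightarrow> nat set \<Rightarrow> 'a" where
  "bprod n F xs = foldr (\<lambda>j acc. bmul n (F j) acc) xs (bconst 1)"

definition beval :: "nat \<Rightarrow> (nat set \<Rightarrow> 'a::comm_ring_1) \<Rightarrow> (nat \<Rightarrow> 'a) \<Rightarrow> 'a" where
  "beval n h x = (\<Sum>S\<in>Pow {1..n}. h S * (\<Prod>l\<in>S. x l))"

text \<open>Data: s j e = s_{j,e}, t j e = t_{j,e} for j in {1..r}, e in {1..n}; iota embeds F_2
into the coefficient ring.\<close>

definition indic :: "nat \<Rightarrow> (bit \<Rightarrow> 'a::comm_ring_1) \<Rightarrow> (nat \<Rightarrow> nat \<Rightarrow> bit) \<Rightarrow> nat \<Rightarrow> nat set \<Rightarrow> 'a" where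
  "indic n iota s j = bprod n (\<lambda>e. bsub (bconst 1) (bsub (bvar e) (bconst (iota (s j e))))) [1..<n+1]"

definition fpoly :: "nat \<Rightarrow> nat \<Rightarrow> (bit \<Rightarrow> 'a::comm_ring_1) \<Rightarrow> (nat \<Rightarrow> nat \<Rightarrow> bit) \<Rightarrow> (nat \<Rightarrow> nat \<Rightarrow> bit) \<Rightarrow> nat \<Rightarrow> nat set \<Rightarrow> 'a" where
  "fpoly n r iota s t i = (\<lambda>S. \<Sum>j\<in>{1..r}. iota (t j i) * indic n iota s j S)"

definition ppoly :: "nat \<Rightarrow> nat \<Rightarrow> (bit \<Rightarrow> 'a::comm_ring_1) \<Rightarrow> (nat \<Rightarrow> nat \<Rightarrow> bit) \<Rightarrow> nat set \<Rightarrow> 'a" where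
  "ppoly n r iota s = bprod n (\<lambda>j. bsub (bconst 1) (indic n iota s j)) [1..<r+1]"

type_synonym F2bar = "bit alg_closure"

definition gpoly :: "nat \<Rightarrow> nat set \<Rightarrow> (nat set, F2bar) mpoly" where
  "gpoly n = (\<lambda>H. if H \<subseteq> {1..n} then mvar H else 0)"

definition Wpoly :: "nat \<Rightarrow> nat \<Rightarrow> (nat \<Rightarrow> nat \<Rightarrow> bit) \<Rightarrow> (nat \<Rightarrow> nat \<Rightarrow> bit) \<Rightarrow> nat \<Rightarrow> nat set \<Rightarrow> (nat set, F2bar) mpoly" where
  "Wpoly n r s t i = badd (fpoly n r (mconst \<circ> to_ac) s t i)
                          (bmul n (gpoly n) (ppoly n r (mconst \<circ> to_ac) s))"

definition Phi :: "nat \<Rightarrow> nat \<Rightarrow> (nat \<Rightarrow> nat \<Rightarrow> bit) \<Rightarrow> (nat \<Rightarrow> nat \<Rightarrow> bit) \<Rightarrow> nat \<Rightarrow> (nat set, F2bar) mpoly \<Rightarrow> (nat set, F2bar) mpoly" where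
  "Phi n r s t i = mhom mconst (Wpoly n r s t i)"

definition cring_carrier :: "nat \<Rightarrow> (nat set, F2bar) mpoly set" where
  "cring_carrier n = {P. mvars P \<subseteq> Pow {1..n}}"

definition kerPhi :: "nat \<Rightarrow> nat \<Rightarrow> (nat \<Rightarrow> nat \<Rightarrow> bit) \<Rightarrow> (nat \<Rightarrow> nat \<Rightarrow> bit) \<Rightarrow> nat \<Rightarrow> (nat set, F2bar) mpoly set" where
  "kerPhi n r s t i = {P \<in> cring_carrier n. Phi n r s t i P = 0}"

end

theory Submission
  imports Defs "HOL-Computational_Algebra.Polynomial"
begin

(* Evaluating W_S at a point b of the algebraic closure gives the coefficient vector of
   f_i + g_b p, where g_b is the Boolean function with coefficients b.  Since the algebraic
   closure is infinite, a polynomial in the c_S lies in ker Phi iff it vanishes at all these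
   vectors.  For an F_2-rational point c of V(ker Phi): the linear forms c |-> c(s_j) - t_{j,i}
   lie in ker Phi, because f_i interpolates the data and p vanishes on the inputs, so c fits
   the data.  Conversely, if c fits the data then c - (f_i + c p) vanishes at every Boolean
   point, hence has zero coefficients by Moebius inversion; so c = f_i + c p is the vector
   W(b) for b = c and is killed by ker Phi. *)

definition is_ring_hom :: "('a::comm_ring_1 \<Rightarrow> 'b::comm_ring_1) \<Rightarrow> bool" where
  "is_ring_hom \<phi> \<longleftrightarrow>
     \<phi> 0 = 0 \<and> \<phi> 1 = 1 \<and> (\<forall>x y. \<phi> (x + y) = \<phi> x + \<phi> y) \<and> (\<forall>x y. \<phi> (x * y) = \<phi> x * \<phi> y)"

lemma is_ring_hom_id: "is_ring_hom id"
  by (simp add: is_ring_hom_def)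

lemma is_ring_hom_to_ac: "is_ring_hom to_ac"
  by (simp add: is_ring_hom_def)

context
  fixes \<phi> :: "'a::comm_ring_1 \<Rightarrow> 'b::comm_ring_1"
  assumes \<phi>: "is_ring_hom \<phi>"
begin

lemma ring_hom_0: "\<phi> 0 = 0" and ring_hom_1: "\<phi> 1 = 1"
  and ring_hom_add: "\<phi> (x + y) = \<phi> x + \<phi> y" and ring_hom_mult: "\<phi> (x * y) = \<phi> x * \<phi> y"
  using \<phi> by (auto simp: is_ring_hom_def)

lemma ring_hom_diff: "\<phi> (x - y) = \<phi> x - \<phi> y"
  by (metis diff_add_cancel add_diff_cancel ring_hom_add)

lemma ring_hom_sum: "\<phi> (\<Sum>j\<in>J. f j) = (\<Sum>j\<in>J. \<phi> (f j))"
  by (induction J rule: infinite_finite_induct) (auto simp: ring_hom_0 ring_hom_add)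

lemma ring_hom_prod: "\<phi> (\<Prod>j\<in>J. f j) = (\<Prod>j\<in>J. \<phi> (f j))"
  by (induction J rule: infinite_finite_induct) (auto simp: ring_hom_1 ring_hom_mult)

lemma ring_hom_power: "\<phi> (x ^ k) = \<phi> x ^ k"
  by (induction k) (auto simp: ring_hom_1 ring_hom_mult)

end

definition monom_eval :: "('v \<Rightarrow> 'b::comm_semiring_1) \<Rightarrow> ('v \<Rightarrow>\<^sub>0 nat) \<Rightarrow> 'b" where
  "monom_eval \<sigma> m = (\<Prod>v\<in>Poly_Mapping.keys m. \<sigma> v ^ Poly_Mapping.lookup m v)"

lemma monom_eval_superset:
  assumes "finite V" "Poly_Mapping.keys m \<subseteq> V"
  shows "monom_eval \<sigma> m = (\<Prod>v\<in>V. \<sigma> v ^ Poly_Mapping.lookup m v)"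
  unfolding monom_eval_def
  by (rule prod.mono_neutral_left[OF assms]) (auto simp: in_keys_iff)

lemma monom_eval_0 [simp]: "monom_eval \<sigma> 0 = 1"
  by (simp add: monom_eval_def)

lemma monom_eval_add: "monom_eval \<sigma> (a + b) = monom_eval \<sigma> a * monom_eval \<sigma> b"
proof -
  let ?V = "Poly_Mapping.keys a \<union> Poly_Mapping.keys b"
  have "monom_eval \<sigma> (a + b) = (\<Prod>v\<in>?V. \<sigma> v ^ Poly_Mapping.lookup (a + b) v)"
    by (rule monom_eval_superset) (auto simp: in_keys_iff lookup_add)
  also have "\<dots> = (\<Prod>v\<in>?V. \<sigma> v ^ Poly_Mapping.lookup a v) * (\<Prod>v\<in>?V. \<sigma> v ^ Poly_Mapping.lookup b v)"
    by (simp add: lookup_add power_add prod.distrib)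
  also have "\<dots> = monom_eval \<sigma> a * monom_eval \<sigma> b"
    by (simp add: monom_eval_superset[of ?V])
  finally show ?thesis .
qed

lemma mhom_eq: "mhom \<phi> \<sigma> P = (\<Sum>m\<in>Poly_Mapping.keys P. \<phi> (Poly_Mapping.lookup P m) * monom_eval \<sigma> m)"
  by (simp add: mhom_def monom_eval_def)

lemma mpoly_sum_singles:
  "p = (\<Sum>m\<in>Poly_Mapping.keys p. Poly_Mapping.single m (Poly_Mapping.lookup p m))"
  by (rule poly_mapping_eqI) (auto simp: lookup_sum lookup_single when_def in_keys_iff)

lemma mhom_0 [simp]: "mhom \<phi> \<sigma> 0 = 0"
  by (simp add: mhom_def)

context
  fixes \<phi> :: "'k::comm_ring_1 \<Rightarrow> 'b::comm_ring_1"
  assumes \<phi>: "is_ring_hom \<phi>"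
begin

lemma mhom_superset:
  assumes "finite K" "Poly_Mapping.keys P \<subseteq> K"
  shows "mhom \<phi> \<sigma> P = (\<Sum>m\<in>K. \<phi> (Poly_Mapping.lookup P m) * monom_eval \<sigma> m)"
  unfolding mhom_eq
  by (rule sum.mono_neutral_left[OF assms]) (auto simp: in_keys_iff ring_hom_0[OF \<phi>])

lemma mhom_single: "mhom \<phi> \<sigma> (Poly_Mapping.single m c) = \<phi> c * monom_eval \<sigma> m"
  by (simp add: mhom_eq ring_hom_0[OF \<phi>])

lemma mhom_add: "mhom \<phi> \<sigma> (p + q) = mhom \<phi> \<sigma> p + mhom \<phi> \<sigma> q"
proof -
  let ?K = "Poly_Mapping.keys p \<union> Poly_Mapping.keys q"
  have "mhom \<phi> \<sigma> (p + q) = (\<Sum>m\<in>?K. \<phi> (Poly_Mapping.lookup (p + q) m) * monom_eval \<sigma> m)"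
    by (rule mhom_superset) (use keys_add[of p q] in auto)
  also have "\<dots> = mhom \<phi> \<sigma> p + mhom \<phi> \<sigma> q"
    by (simp add: lookup_add ring_hom_add[OF \<phi>] distrib_right sum.distrib mhom_superset[of ?K])
  finally show ?thesis .
qed

lemma mhom_sum: "mhom \<phi> \<sigma> (\<Sum>x\<in>A. f x) = (\<Sum>x\<in>A. mhom \<phi> \<sigma> (f x))"
  by (induction A rule: infinite_finite_induct) (simp_all add: mhom_add)

lemma mhom_mult: "mhom \<phi> \<sigma> (p * q) = mhom \<phi> \<sigma> p * mhom \<phi> \<sigma> q"
proof -
  have "p * q = (\<Sum>a\<in>Poly_Mapping.keys p. \<Sum>b\<in>Poly_Mapping.keys q.
       Poly_Mapping.single (a + b) (Poly_Mapping.lookup p a * Poly_Mapping.lookup q b))"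
    by (subst mpoly_sum_singles[of p], subst mpoly_sum_singles[of q])
      (simp add: sum_distrib_left sum_distrib_right mult_single sum.swap[of _ "Poly_Mapping.keys q"])
  then have "mhom \<phi> \<sigma> (p * q) = (\<Sum>a\<in>Poly_Mapping.keys p. \<Sum>b\<in>Poly_Mapping.keys q.
       (\<phi> (Poly_Mapping.lookup p a) * monom_eval \<sigma> a) * (\<phi> (Poly_Mapping.lookup q b) * monom_eval \<sigma> b))"
    by (simp add: mhom_sum mhom_single monom_eval_add ring_hom_mult[OF \<phi>] mult_ac)
  also have "\<dots> = mhom \<phi> \<sigma> p * mhom \<phi> \<sigma> q"
    by (simp add: mhom_eq sum_distrib_left sum_distrib_right) (rule sum.swap)
  finally show ?thesis .
qed

lemma is_ring_hom_mhom: "is_ring_hom (mhom \<phi> \<sigma>)"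
  using mhom_single[of \<sigma> 0 1] by (simp add: is_ring_hom_def mhom_add mhom_mult ring_hom_1[OF \<phi>])

lemma mhom_mconst: "mhom \<phi> \<sigma> (mconst c) = \<phi> c"
  by (simp add: mconst_def mhom_single)

lemma mhom_mvar: "mhom \<phi> \<sigma> (mvar v) = \<sigma> v"
  by (simp add: mvar_def mhom_single ring_hom_1[OF \<phi>] monom_eval_def)

lemma mhom_cong:
  assumes "\<And>v. v \<in> mvars P \<Longrightarrow> \<sigma> v = \<sigma>' v"
  shows "mhom \<phi> \<sigma> P = mhom \<phi> \<sigma>' P"
  unfolding mhom_def
proof (intro sum.cong refl arg_cong2[where f = "(*)"] prod.cong)
  fix m v
  assume "m \<in> Poly_Mapping.keys P" "v \<in> Poly_Mapping.keys m"
  then have "v \<in> mvars P"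
    by (auto simp: mvars_def)
  then show "\<sigma> v ^ Poly_Mapping.lookup m v = \<sigma>' v ^ Poly_Mapping.lookup m v"
    by (simp add: assms)
qed

lemma mhom_mhom_mconst: "mhom \<phi> \<sigma> (mhom mconst W P) = mhom \<phi> (\<lambda>v. mhom \<phi> \<sigma> (W v)) P"
  unfolding mhom_def[of mconst W P] mhom_def[of \<phi> "\<lambda>v. mhom \<phi> \<sigma> (W v)" P]
  by (simp add: ring_hom_sum[OF is_ring_hom_mhom] ring_hom_mult[OF is_ring_hom_mhom]
      ring_hom_prod[OF is_ring_hom_mhom] ring_hom_power[OF is_ring_hom_mhom] mhom_mconst)

end

section \<open>Polynomials vanishing everywhere over an infinite domain\<close>

lemma digits_bound:
  assumes "\<forall>i<k. a i < (D::nat)"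
  shows "(\<Sum>i<k. a i * D ^ i) < D ^ k"
  using assms
proof (induction k)
  case (Suc k)
  then have "(\<Sum>i<Suc k. a i * D ^ i) < (a k + 1) * D ^ k"
    by simp
  also have "\<dots> \<le> D * D ^ k"
    using Suc.prems by (intro mult_right_mono) auto
  finally show ?case by simp
qed simp

lemma digits_unique:
  assumes "\<forall>i<k. a i < (D::nat)" "\<forall>i<k. c i < D"
    and "(\<Sum>i<k. a i * D ^ i) = (\<Sum>i<k. c i * D ^ i)"
  shows "\<forall>i<k. a i = c i"
  using assms
proof (induction k)
  case (Suc k)
  let ?A = "\<Sum>i<k. a i * D ^ i" and ?C = "\<Sum>i<k. c i * D ^ i"
  have "?A < D ^ k" "?C < D ^ k"
    using Suc.prems by (auto intro: digits_bound)
  moreover have eq: "?A + a k * D ^ k = ?C + c k * D ^ k"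
    using Suc.prems(3) by simp
  moreover have "(x + y * D ^ k) div D ^ k = y" "(x + y * D ^ k) mod D ^ k = x"
    if "x < D ^ k" for x y
  proof -
    from that have "D ^ k \<noteq> 0"
      by linarith
    with that show "(x + y * D ^ k) div D ^ k = y" "(x + y * D ^ k) mod D ^ k = x"
      by simp_all
  qed
  ultimately have "a k = c k" and "?A = ?C"
    by metis+
  with Suc show ?case
    by (auto simp: less_Suc_eq)
qed simp

text \<open>Sending the variable \<open>v\<close> to \<open>z ^ D ^ h v\<close>, with \<open>h\<close> injective and \<open>D\<close> exceeding all
  exponents in \<open>Q\<close>, keeps the monomials of \<open>Q\<close> apart: the image of \<open>m\<close> is a power of \<open>z\<close>
  whose exponent has the exponents of \<open>m\<close> as its base-\<open>D\<close> digits.\<close>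

lemma kronecker_substitution:
  fixes Q :: "('v, 'k::comm_semiring_1) mpoly"
  obtains e :: "('v \<Rightarrow>\<^sub>0 nat) \<Rightarrow> nat" and b :: "'k \<Rightarrow> 'v \<Rightarrow> 'k"
  where "inj_on e (Poly_Mapping.keys Q)"
    and "\<And>z m. m \<in> Poly_Mapping.keys Q \<Longrightarrow> monom_eval (b z) m = z ^ e m"
proof -
  define V where "V = mvars Q"
  have finV: "finite V"
    by (simp add: V_def mvars_def)
  obtain h where h: "bij_betw h V {0..<card V}"
    using ex_bij_betw_finite_nat[OF finV] by blast
  define g where "g = the_inv_into V h"
  have keysV: "Poly_Mapping.keys m \<subseteq> V" if "m \<in> Poly_Mapping.keys Q" for m
    using that by (auto simp: V_def mvars_def)
  define D where "D = Suc (\<Sum>m\<in>Poly_Mapping.keys Q. \<Sum>v\<in>V. Poly_Mapping.lookup m v)"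
  have D: "Poly_Mapping.lookup m v < D" if "m \<in> Poly_Mapping.keys Q" for m v
  proof (cases "v \<in> V")
    case True
    have "Poly_Mapping.lookup m v \<le> (\<Sum>v\<in>V. Poly_Mapping.lookup m v)"
      using True finV by (intro member_le_sum) auto
    also have "\<dots> \<le> (\<Sum>m\<in>Poly_Mapping.keys Q. \<Sum>v\<in>V. Poly_Mapping.lookup m v)"
      using that by (intro member_le_sum) auto
    finally show ?thesis by (simp add: D_def)
  next
    case False
    then have "Poly_Mapping.lookup m v = 0"
      using keysV[OF that] by (auto simp: in_keys_iff)
    then show ?thesis
      by (simp add: D_def)
  qed
  define e where "e m = (\<Sum>v\<in>V. Poly_Mapping.lookup m v * D ^ h v)" for m
  have e_digits: "e m = (\<Sum>i<card V. Poly_Mapping.lookup m (g i) * D ^ i)" for m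
  proof -
    have "e m = (\<Sum>v\<in>V. (\<lambda>i. Poly_Mapping.lookup m (g i) * D ^ i) (h v))"
      using h unfolding e_def g_def by (intro sum.cong) (auto simp: bij_betw_def the_inv_into_f_f)
    also have "\<dots> = (\<Sum>i\<in>{0..<card V}. Poly_Mapping.lookup m (g i) * D ^ i)"
      by (rule sum.reindex_bij_betw[OF h])
    finally show ?thesis
      by (simp add: atLeast0LessThan)
  qed
  have "inj_on e (Poly_Mapping.keys Q)"
  proof (rule inj_onI, rule poly_mapping_eqI)
    fix m1 m2 v
    assume m: "m1 \<in> Poly_Mapping.keys Q" "m2 \<in> Poly_Mapping.keys Q" "e m1 = e m2"
    have digits: "\<forall>i<card V. Poly_Mapping.lookup m1 (g i) = Poly_Mapping.lookup m2 (g i)"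
      by (rule digits_unique[where D = D]) (use m D e_digits in auto)
    show "Poly_Mapping.lookup m1 v = Poly_Mapping.lookup m2 v"
    proof (cases "v \<in> V")
      case True
      then have "h v < card V" "g (h v) = v"
        using h by (auto simp: g_def bij_betw_def the_inv_into_f_f)
      then show ?thesis
        using digits by metis
    next
      case False
      then show ?thesis
        using keysV[OF m(1)] keysV[OF m(2)] by (metis in_keys_iff subsetD)
    qed
  qed
  moreover have "monom_eval (\<lambda>v. z ^ (D ^ h v)) m = z ^ e m" if "m \<in> Poly_Mapping.keys Q" for z m
    by (simp add: monom_eval_superset[OF finV keysV[OF that]] e_def power_sum mult.commute
        flip: power_mult)
  ultimately show thesis
    by (rule that)
qed

lemma mpoly_eq_0_if_mhom_id_eq_0:
  fixes Q :: "('v, 'k::idom) mpoly"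
  assumes "infinite (UNIV :: 'k set)" and "\<And>\<sigma>. mhom id \<sigma> Q = 0"
  shows "Q = 0"
proof (rule ccontr)
  assume "Q \<noteq> 0"
  then obtain m0 where m0: "m0 \<in> Poly_Mapping.keys Q"
    by (metis keys_eq_empty ex_in_conv)
  obtain e and b :: "'k \<Rightarrow> 'v \<Rightarrow> 'k" where e: "inj_on e (Poly_Mapping.keys Q)"
    and b: "\<And>z m. m \<in> Poly_Mapping.keys Q \<Longrightarrow> monom_eval (b z) m = z ^ e m"
    using kronecker_substitution[of Q] by blast
  define U where "U = (\<Sum>m\<in>Poly_Mapping.keys Q. monom (Poly_Mapping.lookup Q m) (e m))"
  have U_eval: "poly U z = mhom id (b z) Q" for z
    by (simp add: mhom_eq U_def poly_sum poly_monom b)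
  have "coeff U (e m0) = (\<Sum>m\<in>Poly_Mapping.keys Q. if m = m0 then Poly_Mapping.lookup Q m else 0)"
    unfolding U_def coeff_sum coeff_monom
    by (intro sum.cong refl) (use e m0 in \<open>auto dest: inj_onD\<close>)
  also have "\<dots> \<noteq> 0"
    using m0 by (simp add: in_keys_iff)
  finally have "finite {z. poly U z = 0}"
    by (intro poly_roots_finite) auto
  moreover have "{z. poly U z = 0} = UNIV"
    using assms(2) by (simp add: U_eval)
  ultimately show False
    using assms(1) by simp
qed

lemma infinite_alg_closed_field: "infinite (UNIV :: 'a::alg_closed_field set)"
proof
  assume fin: "finite (UNIV :: 'a set)"
  define q :: "'a poly" where "q = (\<Prod>a\<in>UNIV. [:-a, 1:])"
  have "degree q = card (UNIV :: 'a set)" "card (UNIV :: 'a set) > 0"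
    using fin by (auto simp: q_def degree_prod_eq_sum_degree card_gt_0_iff)
  then have "degree (q + 1) > 0"
    by (subst degree_add_eq_left) auto
  then obtain x where "poly (q + 1) x = 0"
    using alg_closed_imp_poly_has_root by blast
  moreover have "poly q x = 0"
    unfolding q_def poly_prod using fin by (intro prod_zero) auto
  ultimately show False
    by simp
qed

section \<open>The Boolean polynomial ring\<close>

lemma bprod_Nil: "bprod n F [] = bconst 1"
  and bprod_Cons: "bprod n F (j # xs) = bmul n (F j) (bprod n F xs)"
  by (simp_all add: bprod_def)

context
  fixes \<phi> :: "'a::comm_ring_1 \<Rightarrow> 'b::comm_ring_1"
  assumes \<phi>: "is_ring_hom \<phi>"
begin

lemma hom_bconst: "\<phi> \<circ> bconst c = bconst (\<phi> c)"
  by (auto simp: bconst_def ring_hom_0[OF \<phi>] fun_eq_iff)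

lemma hom_bvar: "\<phi> \<circ> bvar e = bvar e"
  by (auto simp: bvar_def ring_hom_0[OF \<phi>] ring_hom_1[OF \<phi>] fun_eq_iff)

lemma hom_badd: "\<phi> \<circ> badd u v = badd (\<phi> \<circ> u) (\<phi> \<circ> v)"
  by (auto simp: badd_def ring_hom_add[OF \<phi>] fun_eq_iff)

lemma hom_bsub: "\<phi> \<circ> bsub u v = bsub (\<phi> \<circ> u) (\<phi> \<circ> v)"
  by (auto simp: bsub_def ring_hom_diff[OF \<phi>] fun_eq_iff)

lemma hom_bmul: "\<phi> \<circ> bmul n u v = bmul n (\<phi> \<circ> u) (\<phi> \<circ> v)"
  unfolding bmul_def fun_eq_iff comp_def
  by (auto simp: ring_hom_sum[OF \<phi>] ring_hom_mult[OF \<phi>] ring_hom_0[OF \<phi>] intro!: sum.cong)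

lemma hom_bprod: "\<phi> \<circ> bprod n F xs = bprod n (\<lambda>j. \<phi> \<circ> F j) xs"
  by (induction xs) (simp_all only: bprod_Nil bprod_Cons hom_bconst ring_hom_1[OF \<phi>] hom_bmul)

lemma hom_indic: "\<phi> \<circ> indic n \<iota> s j = indic n (\<phi> \<circ> \<iota>) s j"
  by (simp add: indic_def hom_bprod hom_bsub hom_bconst hom_bvar ring_hom_1[OF \<phi>])

lemma hom_fpoly: "\<phi> \<circ> fpoly n r \<iota> s t i = fpoly n r (\<phi> \<circ> \<iota>) s t i"
  using hom_indic[of n \<iota> s]
  by (auto simp: fpoly_def ring_hom_sum[OF \<phi>] ring_hom_mult[OF \<phi>] fun_eq_iff)

lemma hom_ppoly: "\<phi> \<circ> ppoly n r \<iota> s = ppoly n r (\<phi> \<circ> \<iota>) s"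
  by (simp add: ppoly_def hom_bprod hom_bsub hom_bconst hom_indic ring_hom_1[OF \<phi>])

lemma hom_beval: "\<phi> (beval n h x) = beval n (\<phi> \<circ> h) (\<phi> \<circ> x)"
  by (simp add: beval_def ring_hom_sum[OF \<phi>] ring_hom_mult[OF \<phi>] ring_hom_prod[OF \<phi>])

end

lemma beval_bconst [simp]: "beval n (bconst c) x = c"
proof -
  have "beval n (bconst c) x = (\<Sum>S\<in>Pow {1..n}. if S = {} then c else 0)"
    unfolding beval_def bconst_def by (intro sum.cong) auto
  then show ?thesis
    by simp
qed

lemma beval_bvar:
  assumes "e \<in> {1..n}"
  shows "beval n (bvar e) x = x e"
proof -
  have "beval n (bvar e) x = (\<Sum>S\<in>Pow {1..n}. if S = {e} then x e else 0)"
    unfolding beval_def bvar_def by (intro sum.cong) auto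
  then show ?thesis
    using assms by simp
qed

lemma beval_badd: "beval n (badd u v) x = beval n u x + beval n v x"
  by (simp add: beval_def badd_def distrib_right sum.distrib)

lemma beval_bsub: "beval n (bsub u v) x = beval n u x - beval n v x"
  by (simp add: beval_def bsub_def left_diff_distrib sum_subtractf)

lemma beval_lin: "beval n (\<lambda>S. \<Sum>j\<in>J. c j * h j S) x = (\<Sum>j\<in>J. c j * beval n (h j) x)"
  unfolding beval_def sum_distrib_right sum_distrib_left
  by (subst sum.swap) (simp add: mult.assoc)

lemma beval_cong:
  assumes "\<And>S. S \<subseteq> {1..n} \<Longrightarrow> h S = h' S" "\<And>l. l \<in> {1..n} \<Longrightarrow> x l = x' l"
  shows "beval n h x = beval n h' x'"
  unfolding beval_def
  by (intro sum.cong refl arg_cong2[where f = "(*)"] prod.cong) (auto simp: assms subset_iff)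

lemma bmul_cong:
  assumes "\<And>S. S \<subseteq> {1..n} \<Longrightarrow> u S = u' S"
  shows "bmul n u v = bmul n u' v"
  unfolding bmul_def by (auto intro!: sum.cong simp: assms)

lemma prod_union_idem:
  assumes "finite A" "finite B" "\<And>l. l \<in> A \<union> B \<Longrightarrow> x l * x l = (x l :: 'a::comm_monoid_mult)"
  shows "prod x (A \<union> B) = prod x A * prod x B"
proof -
  have idem: "prod x (A \<inter> B) * prod x (A \<inter> B) = prod x (A \<inter> B)"
    using assms by (simp flip: prod.distrib)
  have "prod x A * prod x B = prod x (A \<union> B) * prod x (A \<inter> B)"
    using assms by (simp add: prod.union_inter)
  also have "\<dots> = prod x (A \<union> B - A \<inter> B) * (prod x (A \<inter> B) * prod x (A \<inter> B))"
    using assms by (subst prod.subset_diff[of "A \<inter> B" "A \<union> B"]) (auto simp: mult.assoc)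
  also have "\<dots> = prod x (A \<union> B)"
    using assms by (subst idem, subst prod.subset_diff[of "A \<inter> B" "A \<union> B"]) auto
  finally show ?thesis ..
qed

text \<open>The product \<open>bmul\<close> computes with \<open>x\<^sub>e\<^sup>2 = x\<^sub>e\<close>, so evaluation is multiplicative only
  at points with idempotent coordinates.\<close>

lemma beval_bmul:
  assumes "\<And>l. l \<in> {1..n} \<Longrightarrow> x l * x l = x l"
  shows "beval n (bmul n u v) x = beval n u x * beval n v x"
proof -
  let ?P = "Pow {1..n}"
  have "beval n (bmul n u v) x =
      (\<Sum>A\<in>?P. \<Sum>B\<in>?P. \<Sum>S\<in>?P. if A \<union> B = S then u A * v B * (\<Prod>l\<in>S. x l) else 0)"
    unfolding beval_def bmul_def sum_distrib_right
    by (subst sum.swap, rule sum.cong, simp, subst sum.swap) (auto intro!: sum.cong)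
  also have "\<dots> = (\<Sum>A\<in>?P. \<Sum>B\<in>?P. (u A * (\<Prod>l\<in>A. x l)) * (v B * (\<Prod>l\<in>B. x l)))"
  proof (intro sum.cong refl)
    fix A B
    assume "A \<in> ?P" "B \<in> ?P"
    then have "(\<Prod>l\<in>A \<union> B. x l) = (\<Prod>l\<in>A. x l) * (\<Prod>l\<in>B. x l)"
      using assms by (intro prod_union_idem) (auto intro: finite_subset)
    with \<open>A \<in> ?P\<close> \<open>B \<in> ?P\<close>
    show "(\<Sum>S\<in>?P. if A \<union> B = S then u A * v B * (\<Prod>l\<in>S. x l) else 0) =
        (u A * (\<Prod>l\<in>A. x l)) * (v B * (\<Prod>l\<in>B. x l))"
      by (simp add: sum.delta' mult_ac)
  qed
  also have "\<dots> = beval n u x * beval n v x"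
    by (simp add: beval_def sum_distrib_left sum_distrib_right) (rule sum.swap)
  finally show ?thesis .
qed

lemma beval_bprod:
  assumes "\<And>l. l \<in> {1..n} \<Longrightarrow> x l * x l = x l"
  shows "beval n (bprod n F xs) x = prod_list (map (\<lambda>j. beval n (F j) x) xs)"
proof (induction xs)
  case (Cons j xs)
  have "beval n (bprod n F (j # xs)) x = beval n (F j) x * beval n (bprod n F xs) x"
    unfolding bprod_Cons by (rule beval_bmul[OF assms])
  with Cons.IH show ?case
    by simp
qed (simp add: bprod_Nil)

text \<open>Moebius inversion: evaluating at the indicator point of \<open>S\<close> gives the sum of
  the coefficients \<open>h T\<close> over \<open>T \<subseteq> S\<close>.\<close>

lemma beval_eq_0_imp_coeff_eq_0:
  fixes h :: "nat set \<Rightarrow> 'a::comm_ring_1"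
  assumes "\<And>x. beval n h x = 0" and "S \<subseteq> {1..n}"
  shows "h S = 0"
  using assms(2)
proof (induction "card S" arbitrary: S rule: less_induct)
  case less
  have finS: "finite S"
    using less.prems finite_subset by blast
  define x where "x l = (if l \<in> S then 1 else (0::'a))" for l
  have x: "(\<Prod>l\<in>T. x l) = (if T \<subseteq> S then 1 else 0)" if "finite T" for T
  proof (cases "T \<subseteq> S")
    case False
    then obtain l where "l \<in> T" "l \<notin> S"
      by auto
    with that False show ?thesis
      by (auto simp: x_def intro!: prod_zero bexI[of _ l])
  qed (auto simp: x_def intro!: prod.neutral)
  then have x': "(\<Prod>l\<in>T. x l) = (if T \<subseteq> S then 1 else 0)" if "T \<subseteq> {1..n}" for T
    using that finite_subset by blast
  have "0 = beval n h x"
    using assms(1) by simp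
  also have "\<dots> = (\<Sum>T\<in>Pow S. h T)"
    unfolding beval_def using less.prems
    by (intro sum.mono_neutral_cong_right) (auto simp: x')
  also have "\<dots> = h S + (\<Sum>T\<in>Pow S - {S}. h T)"
    using finS by (subst sum.remove[of _ S]) auto
  also have "(\<Sum>T\<in>Pow S - {S}. h T) = 0"
  proof (intro sum.neutral ballI)
    fix T
    assume "T \<in> Pow S - {S}"
    then have "T \<subset> S" by auto
    with finS less.prems show "h T = 0"
      by (intro less.hyps) (auto simp: psubset_card_mono)
  qed
  finally show ?case
    by simp
qed

lemma bit_mult_self [simp]: "(a::bit) * a = a"
  by (cases "a = 0") auto

lemma prod_list_map_upt: "prod_list (map f [1..<k+1]) = (\<Prod>j\<in>{1..k}. f j)"
proof -
  have "set [1..<k+1] = {1..k}"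
    by auto
  then show ?thesis
    by (metis distinct_upt prod.distinct_set_conv_list)
qed

lemma beval_indic:
  "beval n (indic n id s j) x = (if \<forall>e\<in>{1..n}. x e = s j e then 1 else (0::bit))"
proof -
  have "beval n (indic n id s j) x = (\<Prod>e\<in>{1..n}. if x e = s j e then 1 else 0)"
    unfolding indic_def beval_bprod[OF bit_mult_self] prod_list_map_upt
  proof (rule prod.cong)
    fix e
    assume "e \<in> {1..n}"
    then show "beval n (bsub (bconst 1) (bsub (bvar e) (bconst (id (s j e))))) x =
        (if x e = s j e then 1 else 0)"
      by (cases "x e = 0"; cases "s j e = 0") (auto simp: beval_bsub beval_bvar)
  qed simp
  then show ?thesis
    by simp
qed

lemma beval_fpoly_off_inputs:
  assumes "\<forall>k\<in>{1..r}. \<not> (\<forall>e\<in>{1..n}. x e = s k e)"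
  shows "beval n (fpoly n r id s t i) x = 0"
  unfolding fpoly_def beval_lin beval_indic using assms by (intro sum.neutral) auto

lemma beval_ppoly_off_inputs:
  assumes "\<forall>k\<in>{1..r}. \<not> (\<forall>e\<in>{1..n}. x e = s k e)"
  shows "beval n (ppoly n r id s) x = 1"
  unfolding ppoly_def beval_bprod[OF bit_mult_self] prod_list_map_upt
  using assms by (intro prod.neutral) (auto simp: beval_bsub beval_indic)

lemma mhom_id_Wpoly:
  "(\<lambda>S. mhom id b (Wpoly n r s t i S)) =
     badd (to_ac \<circ> fpoly n r id s t i) (bmul n b (to_ac \<circ> ppoly n r id s))"
proof -
  have ev: "is_ring_hom (mhom id b :: (nat set, F2bar) mpoly \<Rightarrow> F2bar)"
    by (rule is_ring_hom_mhom[OF is_ring_hom_id])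
  have coeffs: "mhom id b \<circ> (mconst \<circ> to_ac) = to_ac \<circ> id"
    by (simp add: fun_eq_iff mhom_mconst[OF is_ring_hom_id])
  have g: "bmul n (mhom id b \<circ> gpoly n) = bmul n b"
    by (rule ext, rule bmul_cong) (simp add: gpoly_def mhom_mvar[OF is_ring_hom_id])
  have "(\<lambda>S. mhom id b (Wpoly n r s t i S)) = mhom id b \<circ> Wpoly n r s t i"
    by (simp add: comp_def)
  also have "\<dots> = badd (fpoly n r (to_ac \<circ> id) s t i) (bmul n b (ppoly n r (to_ac \<circ> id) s))"
    unfolding Wpoly_def hom_badd[OF ev] hom_bmul[OF ev] hom_fpoly[OF ev] hom_ppoly[OF ev] coeffs g ..
  also have "\<dots> = badd (to_ac \<circ> fpoly n r id s t i) (bmul n b (to_ac \<circ> ppoly n r id s))"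
    unfolding hom_fpoly[OF is_ring_hom_to_ac] hom_ppoly[OF is_ring_hom_to_ac] ..
  finally show ?thesis .
qed

lemma kerPhi_iff:
  "P \<in> kerPhi n r s t i \<longleftrightarrow>
     P \<in> cring_carrier n \<and> (\<forall>b. mhom id (\<lambda>S. mhom id b (Wpoly n r s t i S)) P = 0)"
proof -
  have "Phi n r s t i P = 0 \<longleftrightarrow> (\<forall>b. mhom id b (Phi n r s t i P) = 0)"
    using mpoly_eq_0_if_mhom_id_eq_0[OF infinite_alg_closed_field] by auto
  then show ?thesis
    by (simp add: kerPhi_def Phi_def mhom_mhom_mconst[OF is_ring_hom_id])
qed

lemma kills_kerPhi_if_interpolant:
  assumes rational: "\<forall>S. S \<subseteq> {1..n} \<longrightarrow> c S \<in> range to_ac"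
    and interpolant:
      "\<forall>S. S \<subseteq> {1..n} \<longrightarrow> of_ac (c S) = badd (fpoly n r id s t i) (bmul n q (ppoly n r id s)) S"
  shows "\<forall>P\<in>kerPhi n r s t i. mhom id c P = 0"
proof
  fix P
  assume P: "P \<in> kerPhi n r s t i"
  have "(\<lambda>S. mhom id (to_ac \<circ> q) (Wpoly n r s t i S)) =
      to_ac \<circ> badd (fpoly n r id s t i) (bmul n q (ppoly n r id s))"
    unfolding mhom_id_Wpoly hom_badd[OF is_ring_hom_to_ac] hom_bmul[OF is_ring_hom_to_ac] ..
  then have "c S = mhom id (to_ac \<circ> q) (Wpoly n r s t i S)" if "S \<subseteq> {1..n}" for S
    using rational interpolant that by (metis comp_apply to_ac_of_ac)
  moreover have "mvars P \<subseteq> Pow {1..n}"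
    using P by (simp add: kerPhi_def cring_carrier_def)
  ultimately have "mhom id c P = mhom id (\<lambda>S. mhom id (to_ac \<circ> q) (Wpoly n r s t i S)) P"
    by (intro mhom_cong[OF is_ring_hom_id]) blast
  also have "\<dots> = 0"
    using P kerPhi_iff by blast
  finally show "mhom id c P = 0" .
qed

lemma mvars_diff: "mvars (p - q) \<subseteq> mvars p \<union> mvars (q :: ('v, 'k::ab_group_add) mpoly)"
  using keys_diff[of p q] by (auto simp: mvars_def)

lemma mvars_sum: "mvars (\<Sum>j\<in>J. f j) \<subseteq> (\<Union>j\<in>J. mvars (f j :: ('v, 'k::comm_monoid_add) mpoly))"
  using keys_sum[of f J] unfolding mvars_def by blast

lemma mvars_mult: "mvars (p * q) \<subseteq> mvars p \<union> mvars (q :: ('v, 'k::comm_semiring_1) mpoly)"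
proof
  fix v
  assume "v \<in> mvars (p * q)"
  then obtain m where m: "m \<in> Poly_Mapping.keys (p * q)" "v \<in> Poly_Mapping.keys m"
    by (auto simp: mvars_def)
  then obtain a b where "m = a + b" "a \<in> Poly_Mapping.keys p" "b \<in> Poly_Mapping.keys q"
    using keys_mult[of p q] by blast
  with m(2) show "v \<in> mvars p \<union> mvars q"
    by (auto simp: mvars_def in_keys_iff lookup_add)
qed

lemma mvars_mconst: "mvars (mconst c) = {}"
  by (simp add: mvars_def mconst_def)

lemma mvars_mvar: "mvars (mvar v :: ('v, 'k::comm_semiring_1) mpoly) \<subseteq> {v}"
  by (simp add: mvars_def mvar_def)

definition eval_form :: "nat \<Rightarrow> (nat \<Rightarrow> 'k) \<Rightarrow> 'k \<Rightarrow> (nat set, 'k::comm_ring_1) mpoly" where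
  "eval_form n x a = (\<Sum>S\<in>Pow {1..n}. mconst (\<Prod>l\<in>S. x l) * mvar S) - mconst a"

lemma mhom_id_eval_form: "mhom id \<sigma> (eval_form n x a) = beval n \<sigma> x - a"
proof -
  note ev = is_ring_hom_mhom[OF is_ring_hom_id]
  show ?thesis
    by (simp add: eval_form_def ring_hom_diff[OF ev] ring_hom_sum[OF ev] ring_hom_mult[OF ev]
        mhom_mconst[OF is_ring_hom_id] mhom_mvar[OF is_ring_hom_id] beval_def mult.commute)
qed

lemma mvars_eval_form: "mvars (eval_form n x a) \<subseteq> Pow {1..n}"
proof -
  have "mvars (mconst (\<Prod>l\<in>S. x l) * mvar S) \<subseteq> {S}" for S
    by (rule order_trans[OF mvars_mult]) (simp add: mvars_mconst mvars_mvar)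
  then have "mvars (\<Sum>S\<in>Pow {1..n}. mconst (\<Prod>l\<in>S. x l) * mvar S) \<subseteq> Pow {1..n}"
    by (intro order_trans[OF mvars_sum] UN_least) auto
  then show ?thesis
    unfolding eval_form_def by (intro order_trans[OF mvars_diff]) (simp add: mvars_mconst)
qed

lemma eval_form_in_cring_carrier: "eval_form n x a \<in> cring_carrier n"
  using mvars_eval_form unfolding cring_carrier_def by blast

context
  fixes n r i :: nat and s t :: "nat \<Rightarrow> nat \<Rightarrow> bit"
  assumes distinct_inputs:
    "\<And>j k. j \<in> {1..r} \<Longrightarrow> k \<in> {1..r} \<Longrightarrow> (\<forall>e\<in>{1..n}. s j e = s k e) \<Longrightarrow> j = k"
begin

lemma beval_fpoly_at_input:
  assumes "k \<in> {1..r}" and "\<forall>e\<in>{1..n}. x e = s k e"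
  shows "beval n (fpoly n r id s t i) x = t k i"
proof -
  have "beval n (fpoly n r id s t i) x = (\<Sum>j\<in>{1..r}. if j = k then t j i else 0)"
    unfolding fpoly_def beval_lin beval_indic
    using assms distinct_inputs[of _ k] by (intro sum.cong) auto
  then show ?thesis
    using assms(1) by simp
qed

lemma beval_ppoly_at_input:
  assumes "k \<in> {1..r}" and "\<forall>e\<in>{1..n}. x e = s k e"
  shows "beval n (ppoly n r id s) x = 0"
  unfolding ppoly_def beval_bprod[OF bit_mult_self] prod_list_map_upt
  using assms by (intro prod_zero bexI[of _ k]) (auto simp: beval_bsub beval_indic)

lemma beval_Wpoly_at_input:
  assumes k: "k \<in> {1..r}"
  shows "beval n (\<lambda>S. mhom id b (Wpoly n r s t i S)) (to_ac \<circ> s k) = to_ac (t k i)"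
proof -
  have "beval n (\<lambda>S. mhom id b (Wpoly n r s t i S)) (to_ac \<circ> s k) =
      to_ac (beval n (fpoly n r id s t i) (s k))
      + beval n b (to_ac \<circ> s k) * to_ac (beval n (ppoly n r id s) (s k))"
    unfolding mhom_id_Wpoly beval_badd
    by (subst beval_bmul) (simp_all add: hom_beval[OF is_ring_hom_to_ac] flip: to_ac_mult)
  then show ?thesis
    using k by (simp add: beval_fpoly_at_input beval_ppoly_at_input)
qed

lemma eval_form_in_kerPhi:
  assumes "k \<in> {1..r}"
  shows "eval_form n (to_ac \<circ> s k) (to_ac (t k i)) \<in> kerPhi n r s t i"
  using assms by (simp add: kerPhi_iff eval_form_in_cring_carrier mhom_id_eval_form beval_Wpoly_at_input)

lemma fits_if_kills_kerPhi:
  assumes rational: "\<forall>S. S \<subseteq> {1..n} \<longrightarrow> c S \<in> range to_ac"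
    and kills: "\<forall>P\<in>kerPhi n r s t i. mhom id c P = 0" and j: "j \<in> {1..r}"
  shows "beval n (\<lambda>S. of_ac (c S)) (s j) = t j i"
proof -
  have "mhom id c (eval_form n (to_ac \<circ> s j) (to_ac (t j i))) = 0"
    using kills eval_form_in_kerPhi[OF j] by blast
  then have "beval n c (to_ac \<circ> s j) = to_ac (t j i)"
    by (simp add: mhom_id_eval_form)
  moreover have "beval n c (to_ac \<circ> s j) = to_ac (beval n (\<lambda>S. of_ac (c S)) (s j))"
    unfolding hom_beval[OF is_ring_hom_to_ac]
    by (rule beval_cong) (simp_all add: rational to_ac_of_ac)
  ultimately show ?thesis
    by simp
qed

lemma interpolant_if_fits:
  assumes fits: "\<forall>j\<in>{1..r}. beval n h (s j) = t j i" and S: "S \<subseteq> {1..n}"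
  shows "h S = badd (fpoly n r id s t i) (bmul n h (ppoly n r id s)) S"
proof -
  let ?g = "bsub h (badd (fpoly n r id s t i) (bmul n h (ppoly n r id s)))"
  have "beval n ?g x = 0" for x
  proof (cases "\<exists>k\<in>{1..r}. \<forall>e\<in>{1..n}. x e = s k e")
    case True
    then obtain k where k: "k \<in> {1..r}" "\<forall>e\<in>{1..n}. x e = s k e"
      by blast
    then have "beval n h x = t k i"
      using fits by (metis beval_cong)
    with k show ?thesis
      by (simp add: beval_bsub beval_badd beval_bmul beval_fpoly_at_input beval_ppoly_at_input)
  next
    case False
    then show ?thesis
      by (simp add: beval_bsub beval_badd beval_bmul beval_fpoly_off_inputs beval_ppoly_off_inputs)
  qed
  then have "?g S = 0"
    using S by (rule beval_eq_0_imp_coeff_eq_0)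
  then show ?thesis
    by (simp only: bsub_def right_minus_eq)
qed

end

theorem mainTheorem1:
  fixes n r i :: nat and s t :: "nat \<Rightarrow> nat \<Rightarrow> bit"
  assumes "n \<ge> 1" and "r \<ge> 1" and "i \<in> {1..n}"
    and distinct_inputs: "\<And>j k. j \<in> {1..r} \<Longrightarrow> k \<in> {1..r} \<Longrightarrow> (\<forall>e\<in>{1..n}. s j e = s k e) \<Longrightarrow> j = k"
  shows "kerPhi n r s t i =
           {P \<in> cring_carrier n. \<forall>b :: nat set \<Rightarrow> F2bar.
              mhom id (\<lambda>S. mhom id b (Wpoly n r s t i S)) P = 0}
    \<and> (\<forall>c :: nat set \<Rightarrow> F2bar. (\<forall>S. S \<subseteq> {1..n} \<longrightarrow> c S \<in> range to_ac) \<longrightarrow>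
           ((\<forall>P\<in>kerPhi n r s t i. mhom id c P = 0)
              \<longleftrightarrow> (\<forall>j\<in>{1..r}. beval n (\<lambda>S. of_ac (c S)) (s j) = t j i))
         \<and> ((\<forall>P\<in>kerPhi n r s t i. mhom id c P = 0)
              \<longleftrightarrow> (\<exists>q :: nat set \<Rightarrow> bit. \<forall>S. S \<subseteq> {1..n} \<longrightarrow>
                     of_ac (c S) = badd (fpoly n r id s t i) (bmul n q (ppoly n r id s)) S)))"
proof (intro conjI allI impI)
  show "kerPhi n r s t i = {P \<in> cring_carrier n. \<forall>b :: nat set \<Rightarrow> F2bar.
      mhom id (\<lambda>S. mhom id b (Wpoly n r s t i S)) P = 0}"
    by (rule Set.set_eqI) (simp only: kerPhi_iff mem_Collect_eq)
next
  fix c :: "nat set \<Rightarrow> F2bar"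
  assume rational: "\<forall>S. S \<subseteq> {1..n} \<longrightarrow> c S \<in> range to_ac"
  let ?kills = "\<forall>P\<in>kerPhi n r s t i. mhom id c P = 0"
  let ?fits = "\<forall>j\<in>{1..r}. beval n (\<lambda>S. of_ac (c S)) (s j) = t j i"
  let ?interpolant = "\<lambda>q. \<forall>S. S \<subseteq> {1..n} \<longrightarrow>
    of_ac (c S) = badd (fpoly n r id s t i) (bmul n q (ppoly n r id s)) S"
  have kills_fits: "?kills \<Longrightarrow> ?fits"
    using fits_if_kills_kerPhi[OF distinct_inputs rational] by blast
  have fits_interpolant: "?fits \<Longrightarrow> ?interpolant (\<lambda>S. of_ac (c S))"
    using interpolant_if_fits[OF distinct_inputs] by blast
  have interpolant_kills: "?interpolant q \<Longrightarrow> ?kills" for q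
    by (rule kills_kerPhi_if_interpolant[OF rational])
  show "?kills \<longleftrightarrow> ?fits"
    using kills_fits fits_interpolant interpolant_kills by blast
  show "?kills \<longleftrightarrow> (\<exists>q. ?interpolant q)"
    using kills_fits fits_interpolant interpolant_kills by blast
qed

end
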